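(* Let $G$ be a finite, simple, connected graph of order $n\ge 4$. If there exists a vertex $u\in V(G)$ with $\deg(u)=n-3$ such that the two vertices of $V(G)\setminus N[u]$ are not twins, then $\gamma_P(G)=1$.
   Context: Two vertices $x,y$ are twins if $N(x)=N(y)$ or $N[x]=N[y]$. For $U\subseteq V(G)$, $cl(U)$ is obtained by coloring $U$ black and repeatedly applying: if a black vertex has exactly one white neighbor, that neighbor becomes black. $S$ is a power dominating set if $cl(N[S])=V(G)$; $\gamma_P(G)$ is the minimum size of a power dominating set. *)

theory Defs
  imports Main
begin

definition simple_graph :: "'a set \<Rightarrow> ('a \<Rightarrow> 'a \<Rightarrow> bool) \<Rightarrow> bool" where
  "simple_graph V E \<longleftrightarrow> finite V \<and> (\<forall>x y. E x y \<longrightarrow> x \<in> V \<and> y \<in> V) \<and>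
     (\<forall>x y. E x y \<longrightarrow> E y x) \<and> (\<forall>x. \<not> E x x)"

definition nbhd :: "'a set \<Rightarrow> ('a \<Rightarrow> 'a \<Rightarrow> bool) \<Rightarrow> 'a \<Rightarrow> 'a set" where
  "nbhd V E x = {y \<in> V. E x y}"

definition cnbhd :: "'a set \<Rightarrow> ('a \<Rightarrow> 'a \<Rightarrow> bool) \<Rightarrow> 'a \<Rightarrow> 'a set" where
  "cnbhd V E x = insert x (nbhd V E x)"

definition degree :: "'a set \<Rightarrow> ('a \<Rightarrow> 'a \<Rightarrow> bool) \<Rightarrow> 'a \<Rightarrow> nat" where
  "degree V E x = card (nbhd V E x)"

definition set_cnbhd :: "'a set \<Rightarrow> ('a \<Rightarrow> 'a \<Rightarrow> bool) \<Rightarrow> 'a set \<Rightarrow> 'a set" where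
  "set_cnbhd V E S = (\<Union>x\<in>S. cnbhd V E x)"

inductive reachable :: "'a set \<Rightarrow> ('a \<Rightarrow> 'a \<Rightarrow> bool) \<Rightarrow> 'a \<Rightarrow> 'a \<Rightarrow> bool"
  for V E where
  refl: "x \<in> V \<Longrightarrow> reachable V E x x"
| step: "reachable V E x y \<Longrightarrow> E y z \<Longrightarrow> reachable V E x z"

definition connected_graph :: "'a set \<Rightarrow> ('a \<Rightarrow> 'a \<Rightarrow> bool) \<Rightarrow> bool" where
  "connected_graph V E \<longleftrightarrow> V \<noteq> {} \<and> (\<forall>x\<in>V. \<forall>y\<in>V. reachable V E x y)"

definition twins :: "'a set \<Rightarrow> ('a \<Rightarrow> 'a \<Rightarrow> bool) \<Rightarrow> 'a \<Rightarrow> 'a \<Rightarrow> bool" where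
  "twins V E x y \<longleftrightarrow> nbhd V E x = nbhd V E y \<or> cnbhd V E x = cnbhd V E y"

definition force_step :: "'a set \<Rightarrow> ('a \<Rightarrow> 'a \<Rightarrow> bool) \<Rightarrow> 'a set \<Rightarrow> 'a set" where
  "force_step V E B = B \<union> {w. \<exists>v\<in>B. nbhd V E v - B = {w}}"

text \<open>Closure: iterating until stable; card V rounds suffice since each
  non-stable round adds a vertex of V.\<close>
definition cl :: "'a set \<Rightarrow> ('a \<Rightarrow> 'a \<Rightarrow> bool) \<Rightarrow> 'a set \<Rightarrow> 'a set" where
  "cl V E U = (force_step V E ^^ card V) U"

definition power_dominating :: "'a set \<Rightarrow> ('a \<Rightarrow> 'a \<Rightarrow> bool) \<Rightarrow> 'a set \<Rightarrow> bool" where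
  "power_dominating V E S \<longleftrightarrow> S \<subseteq> V \<and> cl V E (set_cnbhd V E S) = V"

definition power_domination_number :: "'a set \<Rightarrow> ('a \<Rightarrow> 'a \<Rightarrow> bool) \<Rightarrow> nat" where
  "power_domination_number V E = (LEAST k. \<exists>S. power_dominating V E S \<and> card S = k)"

end

theory Submission
  imports Defs
begin

text \<open>The closed neighbourhood of \<open>u\<close> misses exactly two vertices \<open>a\<close>, \<open>b\<close>. As they are not twins,
  some third vertex \<open>y\<close> is adjacent to exactly one of them: if \<open>a\<close>, \<open>b\<close> are adjacent their closed
  neighbourhoods differ, otherwise their open ones do, and in both cases neither \<open>a\<close> nor \<open>b\<close> itself
  can be the difference. The black vertex \<open>y\<close> forces that one, and the last white vertex, which has a
  neighbour by connectivity, is forced in the next round. Thus \<open>{u}\<close> is power dominating, while the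
  empty set is not.\<close>

lemma force_step_subset_vertices:
  "simple_graph V E \<Longrightarrow> B \<subseteq> V \<Longrightarrow> force_step V E B \<subseteq> V"
  unfolding simple_graph_def force_step_def nbhd_def by blast

lemma force_step_increasing: "B \<subseteq> force_step V E B"
  unfolding force_step_def by blast

lemma force_step_forces: "v \<in> B \<Longrightarrow> nbhd V E v - B = {w} \<Longrightarrow> w \<in> force_step V E B"
  unfolding force_step_def by blast

lemma funpow_force_step_vertices:
  assumes "simple_graph V E"
  shows "(force_step V E ^^ k) V = V"
proof -
  have "force_step V E V = V"
    using force_step_subset_vertices[OF assms order_refl] force_step_increasing
    by (rule subset_antisym)
  then show ?thesis by (induction k) auto
qed

lemma funpow_force_step_empty: "(force_step V E ^^ k) {} = {}"
  by (induction k) (auto simp: force_step_def)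

lemma cl_eq_vertices_if_funpow:
  assumes "simple_graph V E" and "(force_step V E ^^ k) U = V" and "k \<le> card V"
  shows "cl V E U = V"
proof -
  have "card V = (card V - k) + k" using assms(3) by simp
  then have "cl V E U = (force_step V E ^^ (card V - k)) ((force_step V E ^^ k) U)"
    unfolding cl_def by (metis funpow_add comp_apply)
  then show ?thesis using assms(1,2) by (simp add: funpow_force_step_vertices)
qed

lemma force_step_last_white:
  assumes sg: "simple_graph V E" and "B \<subseteq> V" and "V - {c} \<subseteq> B" and "E x c"
  shows "force_step V E B = V"
proof (cases "c \<in> B")
  case True
  then have "B = V" using assms(2,3) by blast
  then show ?thesis using funpow_force_step_vertices[OF sg, of 1] by simp
next
  case False
  have "x \<in> V" "c \<in> V" "x \<noteq> c" using sg \<open>E x c\<close> unfolding simple_graph_def by metis+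
  then have "x \<in> B" and "nbhd V E x - B = {c}"
    using assms(3) \<open>E x c\<close> False unfolding nbhd_def by blast+
  then have "c \<in> force_step V E B" by (rule force_step_forces)
  then show ?thesis
    using force_step_increasing[of B V E] force_step_subset_vertices[OF sg assms(2)] assms(3)
    by blast
qed

lemma connected_graph_has_neighbour:
  assumes "connected_graph V E" and "x \<in> V" and "y \<in> V" and "x \<noteq> y"
  obtains z where "E z y"
proof -
  have "reachable V E x y" using assms(1-3) unfolding connected_graph_def by blast
  then show ?thesis using assms(4) that by cases auto
qed

lemma card_non_neighbours:
  assumes "simple_graph V E" and "u \<in> V"
  shows "card (V - cnbhd V E u) = card V - Suc (degree V E u)"
proof -
  have "finite V" using assms(1) unfolding simple_graph_def by blast
  moreover have sub: "cnbhd V E u \<subseteq> V" and "u \<notin> nbhd V E u"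
    using assms unfolding simple_graph_def cnbhd_def nbhd_def by blast+
  ultimately have "card (cnbhd V E u) = Suc (degree V E u)"
    unfolding degree_def cnbhd_def by (simp add: finite_subset nbhd_def)
  then show ?thesis
    using card_Diff_subset[OF finite_subset[OF sub \<open>finite V\<close>] sub] by simp
qed

lemma non_twins_distinguished:
  assumes sg: "simple_graph V E" and "a \<in> V" and "b \<in> V" and "\<not> twins V E a b"
  obtains y where "y \<in> V - {a, b}" and "E a y \<noteq> E b y"
proof -
  have sym: "E a b \<longleftrightarrow> E b a" and irr: "\<not> E a a" "\<not> E b b"
    using sg unfolding simple_graph_def by blast+
  have "\<exists>y\<in>V. E a y \<noteq> E b y \<and> y \<noteq> a \<and> y \<noteq> b"
  proof (cases "E a b")
    case True
    then have "cnbhd V E a \<noteq> cnbhd V E b" using assms(4) unfolding twins_def by blast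
    then show ?thesis using True sym assms(2,3) unfolding cnbhd_def nbhd_def by blast
  next
    case False
    then have "nbhd V E a \<noteq> nbhd V E b" using assms(4) unfolding twins_def by blast
    then show ?thesis using False sym irr unfolding nbhd_def by blast
  qed
  then show ?thesis using that by blast
qed

lemma funpow_force_step_two_whites:
  assumes sg: "simple_graph V E" and conn: "connected_graph V E"
    and "a \<in> V" and "b \<in> V" and "y \<in> V - {a, b}" and "E a y \<noteq> E b y"
  shows "(force_step V E ^^ 2) (V - {a, b}) = V"
proof -
  let ?B = "force_step V E (V - {a, b})"
  have B_sub: "?B \<subseteq> V" by (rule force_step_subset_vertices[OF sg]) blast
  have B_sup: "V - {a, b} \<subseteq> ?B" by (rule force_step_increasing)
  have sym: "\<And>x x'. E x x' \<Longrightarrow> E x' x" and inV: "\<And>x x'. E x x' \<Longrightarrow> x \<in> V \<and> x' \<in> V"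
    using sg unfolding simple_graph_def by blast+
  have "force_step V E ?B = V" if "E w y" "\<not> E w' y" "(w, w') = (a, b) \<or> (w, w') = (b, a)" for w w'
  proof -
    have "nbhd V E y - (V - {a, b}) = {w}"
      using that inV sym unfolding nbhd_def by blast
    then have "w \<in> ?B" using assms(5) force_step_forces by metis
    moreover have "V - {w'} \<subseteq> insert w (V - {a, b})" using that(3) by auto
    ultimately have "V - {w'} \<subseteq> ?B" using B_sup by blast
    moreover have "w' \<in> V" "y \<noteq> w'" using that(3) assms(3-5) by auto
    then obtain z where "E z w'" using connected_graph_has_neighbour[OF conn] assms(5) by blast
    ultimately show ?thesis by (rule force_step_last_white[OF sg B_sub])
  qed
  then have "force_step V E ?B = V"
    using assms(6) by (cases "E a y") auto
  then show ?thesis by (simp add: numeral_2_eq_2)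
qed

lemma power_domination_number_eq_1:
  assumes "simple_graph V E" and "power_dominating V E {u}"
  shows "power_domination_number V E = 1"
  unfolding power_domination_number_def
proof (rule Least_equality)
  show "\<exists>S. power_dominating V E S \<and> card S = 1" using assms(2) by force
next
  fix k assume "\<exists>S. power_dominating V E S \<and> card S = k"
  then obtain S where S: "power_dominating V E S" "card S = k" by blast
  have "V \<noteq> {}" using assms(2) unfolding power_dominating_def by blast
  then have "S \<noteq> {}"
    using S(1) funpow_force_step_empty unfolding power_dominating_def cl_def set_cnbhd_def
    by fastforce
  moreover have "finite S"
    using S(1) assms(1) finite_subset unfolding power_dominating_def simple_graph_def by blast
  ultimately have "card S > 0" using card_gt_0_iff by blast
  then show "1 \<le> k" using S(2) by simp
qed

theorem mainTheorem7:
  fixes V :: "'a set" and E :: "'a \<Rightarrow> 'a \<Rightarrow> bool" and u :: 'a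
  assumes "simple_graph V E" and "connected_graph V E" and "card V \<ge> 4"
    and "u \<in> V" and "degree V E u = card V - 3"
    and "\<forall>x y. x \<in> V - cnbhd V E u \<and> y \<in> V - cnbhd V E u \<and> x \<noteq> y \<longrightarrow> \<not> twins V E x y"
  shows "power_domination_number V E = 1"
proof -
  have "card (V - cnbhd V E u) = 2"
    using card_non_neighbours[OF assms(1,4)] assms(3,5) by simp
  then obtain a b where ab: "V - cnbhd V E u = {a, b}" "a \<noteq> b" by (meson card_2_iff)
  then have "\<not> twins V E a b" using assms(6) by blast
  moreover have "a \<in> V" "b \<in> V" using ab(1) by auto
  ultimately obtain y where "y \<in> V - {a, b}" "E a y \<noteq> E b y"
    using non_twins_distinguished[OF assms(1)] by blast
  then have "(force_step V E ^^ 2) (V - {a, b}) = V"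
    using funpow_force_step_two_whites[OF assms(1,2) \<open>a \<in> V\<close> \<open>b \<in> V\<close>] by blast
  moreover have "set_cnbhd V E {u} = V - {a, b}"
    using ab(1) assms(4) unfolding set_cnbhd_def cnbhd_def nbhd_def by auto
  ultimately have "cl V E (set_cnbhd V E {u}) = V"
    using cl_eq_vertices_if_funpow[OF assms(1)] assms(3) by simp
  then show ?thesis
    using power_domination_number_eq_1[OF assms(1)] assms(4)
    unfolding power_dominating_def by simp
qed

end
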